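(* Let $\mathfrak g$ be a finite-dimensional complex simple Lie algebra, $\lambda\in P^+$, $i\in I$ and $w\in W$ such that $\lambda-w^{-1}\omega_i\in P^+$. Then $(\lambda,\lambda)$ is maximal in $P^+(2\lambda,2)/\!\sim$ and $(\lambda,\lambda-w^{-1}\omega_i)$ is maximal in $P^+(2\lambda-w^{-1}\omega_i,2)/\!\sim$; that is, if $\boldsymbol\mu\in P^+(2\lambda,2)$ with $(\lambda,\lambda)\preceq\boldsymbol\mu$ then $\boldsymbol\mu\sim(\lambda,\lambda)$, and if $\boldsymbol\mu\in P^+(2\lambda-w^{-1}\omega_i,2)$ with $(\lambda,\lambda-w^{-1}\omega_i)\preceq\boldsymbol\mu$ then $\boldsymbol\mu\sim(\lambda,\lambda-w^{-1}\omega_i)$.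
   Context: $\mathfrak g$ has simple roots indexed by $I$, fundamental weights $\omega_i$, positive roots $R^+$, coroots $h_\alpha$, Weyl group $W$, dominant integral weights $P^+$. For $\lambda\in P^+$, $P^+(\lambda,2)=\{(\lambda_1,\lambda_2)\in(P^+)^2:\lambda_1+\lambda_2=\lambda\}$; $(\lambda_1,\lambda_2)\preceq(\mu_1,\mu_2)$ means $\min\{\lambda_1(h_\alpha),\lambda_2(h_\alpha)\}\le\min\{\mu_1(h_\alpha),\mu_2(h_\alpha)\}$ for all $\alpha\in R^+$, and $\sim$ means equality of these minima for all $\alpha\in R^+$. *)

theory Defs
  imports "HOL-Analysis.Analysis"
begin

text \<open>Root data of a finite-dimensional complex simple Lie algebra, modelled by its
(reduced, crystallographic, irreducible) root system in a real Euclidean space.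
The pairing lambda(h_alpha) is 2 (lambda, alpha) / (alpha, alpha).\<close>

definition cpair :: "'a::euclidean_space \<Rightarrow> 'a \<Rightarrow> real" where
  "cpair lam \<alpha> = 2 * (lam \<bullet> \<alpha>) / (\<alpha> \<bullet> \<alpha>)"

definition refl :: "'a::euclidean_space \<Rightarrow> 'a \<Rightarrow> 'a" where
  "refl \<alpha> x = x - cpair x \<alpha> *\<^sub>R \<alpha>"

definition root_system :: "'a::euclidean_space set \<Rightarrow> bool" where
  "root_system R \<longleftrightarrow> finite R \<and> 0 \<notin> R \<and> span R = UNIV \<and>
     (\<forall>\<alpha>\<in>R. refl \<alpha> ` R = R) \<and>
     (\<forall>\<alpha>\<in>R. \<forall>\<beta>\<in>R. cpair \<beta> \<alpha> \<in> \<int>) \<and>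
     (\<forall>\<alpha>\<in>R. \<forall>c::real. c *\<^sub>R \<alpha> \<in> R \<longrightarrow> c = 1 \<or> c = -1)"

definition irreducible_rs :: "'a::euclidean_space set \<Rightarrow> bool" where
  "irreducible_rs R \<longleftrightarrow> R \<noteq> {} \<and> \<not> (\<exists>A B. A \<noteq> {} \<and> B \<noteq> {} \<and> A \<union> B = R \<and> A \<inter> B = {} \<and>
        (\<forall>\<alpha>\<in>A. \<forall>\<beta>\<in>B. \<alpha> \<bullet> \<beta> = 0))"

text \<open>A base (set of simple roots, indexing set I).\<close>
definition is_base :: "'a::euclidean_space set \<Rightarrow> 'a set \<Rightarrow> bool" where
  "is_base R S \<longleftrightarrow> S \<subseteq> R \<and> independent S \<and>
     (\<forall>\<beta>\<in>R. \<exists>c :: 'a \<Rightarrow> int. \<beta> = (\<Sum>\<alpha>\<in>S. of_int (c \<alpha>) *\<^sub>R \<alpha>) \<and>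
          ((\<forall>\<alpha>\<in>S. c \<alpha> \<ge> 0) \<or> (\<forall>\<alpha>\<in>S. c \<alpha> \<le> 0)))"

definition pos_roots :: "'a::euclidean_space set \<Rightarrow> 'a set \<Rightarrow> 'a set" where
  "pos_roots R S = {\<beta>\<in>R. \<exists>c :: 'a \<Rightarrow> int. \<beta> = (\<Sum>\<alpha>\<in>S. of_int (c \<alpha>) *\<^sub>R \<alpha>) \<and> (\<forall>\<alpha>\<in>S. c \<alpha> \<ge> 0)}"

definition fund_wt :: "'a::euclidean_space set \<Rightarrow> 'a \<Rightarrow> 'a" where
  "fund_wt S i = (THE \<omega>. \<forall>j\<in>S. cpair \<omega> j = (if j = i then 1 else 0))"

definition weights :: "'a::euclidean_space set \<Rightarrow> 'a set" where
  "weights R = {lam. \<forall>\<alpha>\<in>R. cpair lam \<alpha> \<in> \<int>}"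

definition dominant :: "'a::euclidean_space set \<Rightarrow> 'a set \<Rightarrow> 'a set" where
  "dominant R S = {lam \<in> weights R. \<forall>\<alpha>\<in>S. cpair lam \<alpha> \<ge> 0}"

inductive_set weyl :: "'a::euclidean_space set \<Rightarrow> ('a \<Rightarrow> 'a) set" for R where
  weyl_id: "id \<in> weyl R"
| weyl_step: "w \<in> weyl R \<Longrightarrow> \<alpha> \<in> R \<Longrightarrow> refl \<alpha> \<circ> w \<in> weyl R"

definition Pplus2 :: "'a::euclidean_space set \<Rightarrow> 'a set \<Rightarrow> 'a \<Rightarrow> ('a \<times> 'a) set" where
  "Pplus2 R S lam = {(l1, l2). l1 \<in> dominant R S \<and> l2 \<in> dominant R S \<and> l1 + l2 = lam}"

definition minpair :: "'a::euclidean_space \<times> 'a \<Rightarrow> 'a \<Rightarrow> real" where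
  "minpair p \<alpha> = min (cpair (fst p) \<alpha>) (cpair (snd p) \<alpha>)"

definition preceq :: "'a::euclidean_space set \<Rightarrow> 'a set \<Rightarrow> 'a \<times> 'a \<Rightarrow> 'a \<times> 'a \<Rightarrow> bool" where
  "preceq R S p q \<longleftrightarrow> (\<forall>\<alpha>\<in>pos_roots R S. minpair p \<alpha> \<le> minpair q \<alpha>)"

definition simeq :: "'a::euclidean_space set \<Rightarrow> 'a set \<Rightarrow> 'a \<times> 'a \<Rightarrow> 'a \<times> 'a \<Rightarrow> bool" where
  "simeq R S p q \<longleftrightarrow> (\<forall>\<alpha>\<in>pos_roots R S. minpair p \<alpha> = minpair q \<alpha>)"

end

theory Submission
  imports Defs
begin

(* Write mu = (m1, m2) with m1 + m2 = 2 lam - x and y = lam - m1.  The hypothesis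
   (lam, lam - x) <= mu says that the pairing of y with every positive root, hence
   (negating roots) with every root, lies between 0 and the pairing of x.  For x = 0
   this gives y = 0, i.e. mu = (lam, lam).  For x = w^-1(omega_i), transporting by the
   orthogonal map w, the integral weight w y satisfies 0 <= (w y)(h_beta) <= delta(beta,i)
   on simple roots beta, so w y = c omega_i with c in {0,1}; thus mu is (lam, lam - x)
   or (lam - x, lam), both equivalent to (lam, lam - x). *)

lemma cpair_add: "cpair (a + b) \<alpha> = cpair a \<alpha> + cpair b \<alpha>"
  by (simp add: cpair_def inner_add_left add_divide_distrib distrib_left)

lemma cpair_diff: "cpair (a - b) \<alpha> = cpair a \<alpha> - cpair b \<alpha>"
  by (simp add: cpair_def inner_diff_left diff_divide_distrib right_diff_distrib)

lemma cpair_scale: "cpair (c *\<^sub>R a) \<alpha> = c * cpair a \<alpha>"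
  by (simp add: cpair_def)

lemma cpair_neg_root: "cpair a (- \<alpha>) = - cpair a \<alpha>"
  by (simp add: cpair_def)

lemma cpair_orthogonal_transformation:
  assumes "orthogonal_transformation f"
  shows "cpair (f a) (f b) = cpair a b"
  using assms by (simp add: cpair_def orthogonal_transformation_def)

lemma cpair_zero_by_span:
  assumes "span T = UNIV" and "\<forall>j\<in>T. cpair (v::'a::euclidean_space) j = 0"
  shows "v = 0"
proof -
  have "\<forall>j\<in>T. orthogonal v j"
    using assms(2) by (auto simp: cpair_def orthogonal_def)
  then have "orthogonal v v"
    using orthogonal_to_span assms(1) by blast
  then show ?thesis by (simp add: orthogonal_def)
qed

lemma weights_diff: "a \<in> weights R \<Longrightarrow> b \<in> weights R \<Longrightarrow> a - b \<in> weights R"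
  by (simp add: weights_def cpair_diff)

lemma refl_orthogonal_transformation:
  assumes "(\<alpha>::'a::euclidean_space) \<noteq> 0"
  shows "orthogonal_transformation (refl \<alpha>)"
  unfolding orthogonal_transformation_def
proof (intro conjI allI)
  show "linear (refl \<alpha>)"
    by (rule linearI) (simp_all add: refl_def cpair_add cpair_scale algebra_simps)
  fix x y
  show "refl \<alpha> x \<bullet> refl \<alpha> y = x \<bullet> y" using assms
    by (simp add: refl_def cpair_def inner_diff_left inner_diff_right inner_commute field_simps)
qed

lemma weyl_orthogonal_permutes_roots:
  assumes "root_system R" and "w \<in> weyl R"
  shows "orthogonal_transformation w \<and> w ` R = R"
  using assms(2)
proof induction
  case weyl_id
  then show ?case by (simp add: id_def)
next
  case (weyl_step w \<alpha>)
  have "\<alpha> \<noteq> 0" and "refl \<alpha> ` R = R"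
    using assms(1) weyl_step(2) unfolding root_system_def by auto
  then show ?case
    using weyl_step(3) refl_orthogonal_transformation orthogonal_transformation_compose
    by (metis image_comp)
qed

lemma weyl_inv_orthogonal_permutes_roots:
  assumes "root_system R" and "w \<in> weyl R"
  shows "orthogonal_transformation (inv w) \<and> inv w ` R = R"
proof -
  have w: "orthogonal_transformation w" "w ` R = R"
    using weyl_orthogonal_permutes_roots[OF assms] by auto
  then have "inv w ` R = R"
    by (metis image_inv_f_f orthogonal_transformation_inj)
  then show ?thesis using w(1) orthogonal_transformation_inv by blast
qed

lemma base_subset_roots: "is_base R S \<Longrightarrow> S \<subseteq> R"
  by (simp add: is_base_def)

lemma base_span:
  assumes "root_system R" and "is_base R S"
  shows "span S = UNIV"
proof -
  have "R \<subseteq> span S"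
  proof
    fix \<beta> assume "\<beta> \<in> R"
    then obtain c :: "'a \<Rightarrow> int" where "\<beta> = (\<Sum>\<alpha>\<in>S. of_int (c \<alpha>) *\<^sub>R \<alpha>)"
      using assms(2) unfolding is_base_def by blast
    then show "\<beta> \<in> span S" by (simp add: span_sum span_scale span_base)
  qed
  then have "span R \<subseteq> span S" by (simp add: span_minimal)
  then show ?thesis using assms(1) unfolding root_system_def by auto
qed

text \<open>Existence comes from extending a linear functional off
  the independent set S, uniqueness from S spanning.\<close>
lemma fund_wt_pairing:
  assumes "root_system R" and "is_base R S"
  shows "\<forall>j\<in>S. cpair (fund_wt S i) j = (if j = i then 1 else 0)"
proof -
  have nz: "\<forall>j\<in>S. j \<bullet> j \<noteq> 0"
    using assms unfolding root_system_def is_base_def by auto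
  have "independent S" using assms(2) unfolding is_base_def by auto
  then obtain g :: "'a \<Rightarrow> real" where g: "linear g"
    "\<forall>x\<in>S. g x = (if x = i then (x \<bullet> x) / 2 else 0)"
    using linear_independent_extend[of S "\<lambda>x. if x = i then (x \<bullet> x) / 2 else (0::real)"]
    by auto
  define \<omega> where "\<omega> = adjoint g 1"
  have \<omega>_inner: "\<And>x. \<omega> \<bullet> x = g x"
    unfolding \<omega>_def using adjoint_works[OF g(1)] by (simp add: inner_commute)
  have \<omega>: "\<forall>j\<in>S. cpair \<omega> j = (if j = i then 1 else 0)"
    using nz g(2) by (auto simp: cpair_def \<omega>_inner)
  have "fund_wt S i = \<omega>" unfolding fund_wt_def
  proof (rule the_equality)
    fix \<omega>' assume "\<forall>j\<in>S. cpair \<omega>' j = (if j = i then 1 else 0)"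
    then have "\<forall>j\<in>S. cpair (\<omega>' - \<omega>) j = 0" using \<omega> by (simp add: cpair_diff)
    then show "\<omega>' = \<omega>" using cpair_zero_by_span[OF base_span[OF assms]] by fastforce
  qed (rule \<omega>)
  then show ?thesis using \<omega> by simp
qed

lemma neg_root:
  assumes "root_system R" and "\<gamma> \<in> R"
  shows "- \<gamma> \<in> R"
proof -
  have "\<gamma> \<noteq> 0" "refl \<gamma> ` R = R" using assms unfolding root_system_def by auto
  moreover have "refl \<gamma> \<gamma> = - \<gamma>" using \<open>\<gamma> \<noteq> 0\<close>
    by (simp add: refl_def cpair_def scaleR_2)
  ultimately show ?thesis using assms(2) by (metis imageI)
qed

lemma root_pos_or_neg:
  assumes "root_system R" and "is_base R S" and "\<gamma> \<in> R"
  shows "\<gamma> \<in> pos_roots R S \<or> - \<gamma> \<in> pos_roots R S"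
proof -
  obtain c :: "'a \<Rightarrow> int" where c: "\<gamma> = (\<Sum>\<alpha>\<in>S. of_int (c \<alpha>) *\<^sub>R \<alpha>)"
    "(\<forall>\<alpha>\<in>S. c \<alpha> \<ge> 0) \<or> (\<forall>\<alpha>\<in>S. c \<alpha> \<le> 0)"
    using assms(2,3) unfolding is_base_def by blast
  show ?thesis
  proof (cases "\<forall>\<alpha>\<in>S. c \<alpha> \<ge> 0")
    case True
    then show ?thesis using c assms(3) unfolding pos_roots_def by blast
  next
    case False
    then have "\<forall>\<alpha>\<in>S. - c \<alpha> \<ge> 0" using c(2) by auto
    moreover have "- \<gamma> = (\<Sum>\<alpha>\<in>S. of_int (- c \<alpha>) *\<^sub>R \<alpha>)"
      using c(1) by (simp add: sum_negf[symmetric])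
    ultimately have "- \<gamma> \<in> pos_roots R S" using neg_root[OF assms(1,3)]
      unfolding pos_roots_def by (auto intro!: exI[of _ "\<lambda>a. - c a"])
    then show ?thesis ..
  qed
qed

lemma Ints_between_0_1: "(t::real) \<in> \<int> \<Longrightarrow> 0 \<le> t \<Longrightarrow> t \<le> 1 \<Longrightarrow> t = 0 \<or> t = 1"
  by (metis Ints_cases of_int_0_le_iff of_int_le_1_iff of_int_eq_0_iff of_int_eq_1_iff
      le_less not_le int_one_le_iff_zero_less)

lemma weight_below_fund_wt:
  assumes "root_system R" and "is_base R S" and "i \<in> S"
    and "\<forall>\<beta>\<in>S. cpair z \<beta> \<in> \<int> \<and> 0 \<le> cpair z \<beta> \<and> cpair z \<beta> \<le> cpair (fund_wt S i) \<beta>"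
  shows "\<exists>c. (c = 0 \<or> c = 1) \<and> z = c *\<^sub>R fund_wt S i"
proof (intro exI conjI)
  define c where "c = cpair z i"
  have \<omega>: "\<forall>j\<in>S. cpair (fund_wt S i) j = (if j = i then 1 else 0)"
    by (rule fund_wt_pairing[OF assms(1,2)])
  show "c = 0 \<or> c = 1"
    using assms(3,4) \<omega> Ints_between_0_1[of c] unfolding c_def by auto
  have "\<forall>\<beta>\<in>S. cpair (z - c *\<^sub>R fund_wt S i) \<beta> = 0"
    using assms(4) \<omega> by (auto simp: cpair_diff cpair_scale c_def intro: order.antisym)
  then show "z = c *\<^sub>R fund_wt S i"
    using cpair_zero_by_span[OF base_span[OF assms(1,2)]] by fastforce
qed

text \<open>Pulling back by u reduces this to the simple roots.\<close>
lemma weight_between_0_and_image: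
  assumes "root_system R" and "is_base R S" and "i \<in> S"
    and u: "orthogonal_transformation u" "u ` R \<subseteq> R"
    and "y \<in> weights R"
    and bounds: "\<forall>\<gamma>\<in>R. min 0 (cpair (u (fund_wt S i)) \<gamma>) \<le> cpair y \<gamma> \<and>
                       cpair y \<gamma> \<le> max 0 (cpair (u (fund_wt S i)) \<gamma>)"
  shows "\<exists>c. (c = 0 \<or> c = 1) \<and> y = c *\<^sub>R u (fund_wt S i)"
proof -
  define \<omega> where "\<omega> = fund_wt S i"
  define z where "z = inv u y"
  have y: "y = u z"
    unfolding z_def using orthogonal_transformation_surj[OF u(1)] by (simp add: surj_f_inv_f)
  have "\<forall>\<beta>\<in>S. cpair z \<beta> \<in> \<int> \<and> 0 \<le> cpair z \<beta> \<and> cpair z \<beta> \<le> cpair \<omega> \<beta>"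
  proof
    fix \<beta> assume "\<beta> \<in> S"
    then have "u \<beta> \<in> R" using u(2) base_subset_roots[OF assms(2)] by auto
    moreover have "0 \<le> cpair \<omega> \<beta>"
      using fund_wt_pairing[OF assms(1,2)] \<open>\<beta> \<in> S\<close> unfolding \<omega>_def by simp
    ultimately show "cpair z \<beta> \<in> \<int> \<and> 0 \<le> cpair z \<beta> \<and> cpair z \<beta> \<le> cpair \<omega> \<beta>"
      using bounds assms(6) unfolding \<omega>_def[symmetric] weights_def y
      by (auto simp: cpair_orthogonal_transformation[OF u(1)])
  qed
  then obtain c where "c = 0 \<or> c = 1" "z = c *\<^sub>R \<omega>"
    using weight_below_fund_wt[OF assms(1-3)] unfolding \<omega>_def by blast
  then show ?thesis
    unfolding y \<omega>_def by (auto simp: orthogonal_transformation_scaleR[OF u(1)])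
qed

lemma min_squeeze:
  fixes l t a b :: real
  assumes "a + b = 2 * l - t" and "min l (l - t) \<le> min a b"
  shows "min 0 t \<le> l - a \<and> l - a \<le> max 0 t"
  using assms by (auto simp: min_def max_def split: if_splits)

lemma preceq_bounds_on_roots:
  assumes "root_system R" and "is_base R S"
    and "\<mu> \<in> Pplus2 R S (2 *\<^sub>R lam - x)" and "preceq R S (lam, lam - x) \<mu>"
    and "\<gamma> \<in> R"
  shows "min 0 (cpair x \<gamma>) \<le> cpair (lam - fst \<mu>) \<gamma> \<and>
         cpair (lam - fst \<mu>) \<gamma> \<le> max 0 (cpair x \<gamma>)"
proof -
  have sum: "fst \<mu> + snd \<mu> = 2 *\<^sub>R lam - x"
    using assms(3) unfolding Pplus2_def by auto
  have pos: "min 0 (cpair x \<alpha>) \<le> cpair (lam - fst \<mu>) \<alpha> \<and>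
             cpair (lam - fst \<mu>) \<alpha> \<le> max 0 (cpair x \<alpha>)"
    if "\<alpha> \<in> pos_roots R S" for \<alpha>
  proof -
    have "cpair (fst \<mu>) \<alpha> + cpair (snd \<mu>) \<alpha> = 2 * cpair lam \<alpha> - cpair x \<alpha>"
      using arg_cong[OF sum, of "\<lambda>v. cpair v \<alpha>"] by (simp add: cpair_add cpair_diff cpair_scale)
    moreover have "min (cpair lam \<alpha>) (cpair lam \<alpha> - cpair x \<alpha>) \<le>
                   min (cpair (fst \<mu>) \<alpha>) (cpair (snd \<mu>) \<alpha>)"
      using assms(4) that unfolding preceq_def minpair_def by (simp add: cpair_diff)
    ultimately show ?thesis using min_squeeze by (simp add: cpair_diff)
  qed
  from root_pos_or_neg[OF assms(1,2,5)] show ?thesis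
  proof
    assume "- \<gamma> \<in> pos_roots R S"
    from pos[OF this] show ?thesis
      by (auto simp: cpair_neg_root min_def max_def split: if_splits)
  qed (rule pos)
qed

lemma simeq_swap_pair:
  assumes "\<mu> = (lam, lam - x) \<or> \<mu> = (lam - x, lam)"
  shows "simeq R S \<mu> (lam, lam - x)"
  using assms by (auto simp: simeq_def minpair_def min.commute)

theorem lemma5p2:
  fixes R S :: "'a::euclidean_space set" and lam i :: 'a and w :: "'a \<Rightarrow> 'a"
  assumes "root_system R" and "irreducible_rs R" and "is_base R S"
    and "lam \<in> dominant R S" and "i \<in> S" and "w \<in> weyl R"
    and "lam - inv w (fund_wt S i) \<in> dominant R S"
  shows "(\<forall>\<mu>\<in>Pplus2 R S (2 *\<^sub>R lam).
            preceq R S (lam, lam) \<mu> \<longrightarrow> simeq R S \<mu> (lam, lam))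
       \<and> (\<forall>\<mu>\<in>Pplus2 R S (2 *\<^sub>R lam - inv w (fund_wt S i)).
            preceq R S (lam, lam - inv w (fund_wt S i)) \<mu> \<longrightarrow>
            simeq R S \<mu> (lam, lam - inv w (fund_wt S i)))"
proof (intro conjI ballI impI)
  fix \<mu> assume "\<mu> \<in> Pplus2 R S (2 *\<^sub>R lam)" and "preceq R S (lam, lam) \<mu>"
  moreover have "cpair 0 \<gamma> = 0" for \<gamma> :: 'a by (simp add: cpair_def)
  ultimately have "\<forall>\<gamma>\<in>R. cpair (lam - fst \<mu>) \<gamma> = 0"
    using preceq_bounds_on_roots[OF assms(1,3), of \<mu> lam 0] by (simp add: order.antisym)
  then have "lam - fst \<mu> = 0"
    using cpair_zero_by_span assms(1) unfolding root_system_def by blast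
  then have "fst \<mu> = lam" by simp
  moreover have "fst \<mu> + snd \<mu> = 2 *\<^sub>R lam"
    using \<open>\<mu> \<in> Pplus2 R S (2 *\<^sub>R lam)\<close> unfolding Pplus2_def by auto
  ultimately have "\<mu> = (lam, lam - 0)" by (simp add: prod_eq_iff scaleR_2)
  then show "simeq R S \<mu> (lam, lam)" using simeq_swap_pair by fastforce
next
  define x where "x = inv w (fund_wt S i)"
  fix \<mu> assume \<mu>: "\<mu> \<in> Pplus2 R S (2 *\<^sub>R lam - x)" and "preceq R S (lam, lam - x) \<mu>"
  have "lam - fst \<mu> \<in> weights R"
    using \<mu> assms(4) by (auto simp: Pplus2_def dominant_def intro: weights_diff)
  then obtain c where c: "c = 0 \<or> c = 1" "lam - fst \<mu> = c *\<^sub>R x"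
    using weight_between_0_and_image[OF assms(1,3,5)]
      weyl_inv_orthogonal_permutes_roots[OF assms(1,6)]
      preceq_bounds_on_roots[OF assms(1,3) \<mu> \<open>preceq R S (lam, lam - x) \<mu>\<close>]
    unfolding x_def by blast
  moreover have "fst \<mu> + snd \<mu> = 2 *\<^sub>R lam - x" using \<mu> unfolding Pplus2_def by auto
  ultimately have "\<mu> = (lam, lam - x) \<or> \<mu> = (lam - x, lam)"
    by (auto simp: prod_eq_iff scaleR_2 algebra_simps)
  then show "simeq R S \<mu> (lam, lam - x)" by (rule simeq_swap_pair)
qed

end
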